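(* Let $A$ be a metric space, $\sigma:\mathbb{R}^N\times A\to\mathbb{R}^{N\times m}$, $b:\mathbb{R}^N\times A\to\mathbb{R}^N$, $c:\mathbb{R}^N\times A\to\mathbb{R}$ continuous, $a=\sigma\sigma^T$, and suppose: (C1) for every $R>0$ there is $K_R$ with $\sup_{|x|\le R,\alpha\in A}(|\sigma|+|b|+|c|)\le K_R$ and $|\sigma(x,\alpha)-\sigma(y,\alpha)|+|b(x,\alpha)-b(y,\alpha)|\le K_R|x-y|$ for all $|x|,|y|\le R$, $\alpha\in A$; (C2) $c\ge0$ and $c$ is continuous in $x$ uniformly in $|x|\le R$, $\alpha\in A$, for each $R$; (C3) $\xi^Ta(x,\alpha)\xi\ge|\xi|^2/K_R$ for all $\xi\in\mathbb{R}^N$, $|x|\le R$, $\alpha\in A$; (C4) $\sup_{\alpha\in A}(\mathrm{tr}\,a(x,\alpha)+b(x,\alpha)\cdot x-c(x,\alpha)|x|^2/2)\le0$ for $|x|\ge R_o$, for some $R_o\ge0$. Let $L^\alpha u=\mathrm{tr}(a(x,\alpha)D^2u)+b(x,\alpha)\cdot Du$, $G[u]=\inf_\alpha\{-L^\alpha u+c(x,\alpha)u\}$, $\tilde G[u]=\sup_\alpha\{-L^\alpha u+c(x,\alpha)u\}$. (a) If $u\in USC(\mathbb{R}^N)$ is a viscosity subsolution of $G[u]\le0$ in $\mathbb{R}^N$ with $\limsup_{|x|\to\infty}u(x)/|x|^2\le0$, and either $u\ge0$ or $c\equiv0$, then $u$ is constant. (b) If $v\in LSC(\mathbb{R}^N)$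 is a viscosity supersolution of $\tilde G[v]\ge0$ in $\mathbb{R}^N$ with $\liminf_{|x|\to\infty}v(x)/|x|^2\ge0$, and either $v\le0$ or $c\equiv0$, then $v$ is constant.
   Context: Sub- and supersolutions are in the viscosity sense. *)

theory Defs
  imports "HOL-Analysis.Analysis"
begin

definition usc :: "('a::topological_space \<Rightarrow> real) \<Rightarrow> bool" where
  "usc u \<longleftrightarrow> (\<forall>t. open {x. u x < t})"

definition lsc :: "('a::topological_space \<Rightarrow> real) \<Rightarrow> bool" where
  "lsc u \<longleftrightarrow> (\<forall>t. open {x. u x > t})"

definition C2_with :: "(real^'n \<Rightarrow> real) \<Rightarrow> (real^'n \<Rightarrow> real^'n) \<Rightarrow> (real^'n \<Rightarrow> real^'n^'n) \<Rightarrow> bool" where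
  "C2_with phi Dphi D2phi \<longleftrightarrow>
     (\<forall>x. (phi has_derivative (\<lambda>h. Dphi x \<bullet> h)) (at x)) \<and>
     (\<forall>x. (Dphi has_derivative (\<lambda>h. D2phi x *v h)) (at x)) \<and>
     continuous_on UNIV D2phi"

definition diffmat :: "(real^'n \<Rightarrow> 'a \<Rightarrow> real^'m^'n) \<Rightarrow> real^'n \<Rightarrow> 'a \<Rightarrow> real^'n^'n" where
  "diffmat \<sigma> x \<alpha> = \<sigma> x \<alpha> ** transpose (\<sigma> x \<alpha>)"

text \<open>Linear operator L^alpha applied to (p = Du, X = D^2 u) at x.\<close>
definition Lop :: "(real^'n \<Rightarrow> 'a \<Rightarrow> real^'m^'n) \<Rightarrow> (real^'n \<Rightarrow> 'a \<Rightarrow> real^'n)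
    \<Rightarrow> real^'n \<Rightarrow> 'a \<Rightarrow> real^'n \<Rightarrow> real^'n^'n \<Rightarrow> real" where
  "Lop \<sigma> b x \<alpha> p X = trace (diffmat \<sigma> x \<alpha> ** X) + b x \<alpha> \<bullet> p"

definition Gop :: "(real^'n \<Rightarrow> 'a \<Rightarrow> real^'m^'n) \<Rightarrow> (real^'n \<Rightarrow> 'a \<Rightarrow> real^'n) \<Rightarrow> (real^'n \<Rightarrow> 'a \<Rightarrow> real)
    \<Rightarrow> real^'n \<Rightarrow> real \<Rightarrow> real^'n \<Rightarrow> real^'n^'n \<Rightarrow> real" where
  "Gop \<sigma> b c x r p X = (INF \<alpha>. - Lop \<sigma> b x \<alpha> p X + c x \<alpha> * r)"

definition Gtop :: "(real^'n \<Rightarrow> 'a \<Rightarrow> real^'m^'n) \<Rightarrow> (real^'n \<Rightarrow> 'a \<Rightarrow> real^'n) \<Rightarrow> (real^'n \<Rightarrow> 'a \<Rightarrow> real)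
    \<Rightarrow> real^'n \<Rightarrow> real \<Rightarrow> real^'n \<Rightarrow> real^'n^'n \<Rightarrow> real" where
  "Gtop \<sigma> b c x r p X = (SUP \<alpha>. - Lop \<sigma> b x \<alpha> p X + c x \<alpha> * r)"

definition visc_sub :: "(real^'n \<Rightarrow> real \<Rightarrow> real^'n \<Rightarrow> real^'n^'n \<Rightarrow> real) \<Rightarrow> (real^'n \<Rightarrow> real) \<Rightarrow> bool" where
  "visc_sub F u \<longleftrightarrow> usc u \<and>
     (\<forall>phi Dphi D2phi x0. C2_with phi Dphi D2phi \<and>
        (\<exists>r>0. \<forall>y\<in>ball x0 r. u y - phi y \<le> u x0 - phi x0)
        \<longrightarrow> F x0 (u x0) (Dphi x0) (D2phi x0) \<le> 0)"

definition visc_super :: "(real^'n \<Rightarrow> real \<Rightarrow> real^'n \<Rightarrow> real^'n^'n \<Rightarrow> real) \<Rightarrow> (real^'n \<Rightarrow> real) \<Rightarrow> bool" where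
  "visc_super F v \<longleftrightarrow> lsc v \<and>
     (\<forall>phi Dphi D2phi x0. C2_with phi Dphi D2phi \<and>
        (\<exists>r>0. \<forall>y\<in>ball x0 r. v y - phi y \<ge> v x0 - phi x0)
        \<longrightarrow> F x0 (v x0) (Dphi x0) (D2phi x0) \<ge> 0)"

end

theory Submission
  imports Defs
begin

(*
  First, u attains its maximum.  Otherwise u exceeds its maximum M over a
  ball of radius R \<ge> Ro at some point, and u - \<epsilon> h with h x = |x|\<^sup>2/2 + ln (1 + |x|\<^sup>2/2) has, by the
  quadratic growth bound, a maximum above M outside that ball.  At that point the Lyapunov
  condition (C4), ellipticity and the strict concavity of t \<mapsto> ln (1 + t/2) make h a strict
  supersolution, contradicting the subsolution inequality.  Second, a maximum propagates (Hopf):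
  if u y < max u, a ball around y touches the set where the maximum is attained, and adding the
  barrier \<delta> exp (-\<kappa> |x - y|\<^sup>2) with \<kappa> large forces a strict interior maximum in an annulus where
  the barrier is again a strict supersolution.  Part (b) is part (a) for -v.
*)

section \<open>Second-order operators on radial test functions\<close>

definition outer_product :: "real^'n \<Rightarrow> real^'n^'n" where
  "outer_product v = (\<chi> i j. v$i * v$j)"

lemma outer_product_mult_vec: "outer_product v *v h = (v \<bullet> h) *\<^sub>R v"
  by (simp add: outer_product_def matrix_vector_mult_def inner_vec_def vec_eq_iff
      sum_distrib_left sum_distrib_right algebra_simps)

lemma trace_mult_scaled_identity_plus_outer:
  fixes a :: "real^'n^'n"
  shows "trace (a ** (A *\<^sub>R mat 1 + B *\<^sub>R outer_product v)) = A * trace a + B * (v \<bullet> (a *v v))"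
proof -
  have "trace (a ** (A *\<^sub>R mat 1 + B *\<^sub>R outer_product v))
      = (\<Sum>i\<in>UNIV. \<Sum>k\<in>UNIV. (if k = i then A * a$i$i else 0) + B * (a$i$k * v$k * v$i))"
    by (simp add: trace_def matrix_matrix_mult_def outer_product_def mat_def)
       (intro sum.cong refl, auto simp: algebra_simps)
  also have "\<dots> = A * trace a + B * (v \<bullet> (a *v v))"
    by (simp add: sum.distrib trace_def inner_vec_def matrix_vector_mult_def
        sum_distrib_left sum_distrib_right algebra_simps)
  finally show ?thesis .
qed

lemma trace_diffmat: "trace (diffmat \<sigma> x \<alpha>) = norm (\<sigma> x \<alpha>) ^ 2"
  by (simp add: diffmat_def trace_def matrix_matrix_mult_def transpose_def
      power2_norm_eq_inner inner_vec_def)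

lemma Lop_radial:
  "Lop \<sigma> b x \<alpha> (A *\<^sub>R v) ((2 * g1) *\<^sub>R mat 1 + B *\<^sub>R outer_product v)
   = 2 * g1 * norm (\<sigma> x \<alpha>) ^ 2 + A * (b x \<alpha> \<bullet> v) + B * (v \<bullet> (diffmat \<sigma> x \<alpha> *v v))"
  by (simp add: Lop_def trace_mult_scaled_identity_plus_outer trace_diffmat)

lemma Lop_uminus: "Lop \<sigma> b x \<alpha> (- p) (- X) = - Lop \<sigma> b x \<alpha> p X"
  by (simp add: Lop_def trace_def matrix_matrix_mult_def sum_negf)

lemma Gop_eq_uminus_Gtop: "Gop \<sigma> b c x r p X = - Gtop \<sigma> b c x (- r) (- p) (- X)"
proof -
  have "Gtop \<sigma> b c x (- r) (- p) (- X)
      = Sup (uminus ` range (\<lambda>\<alpha>. - Lop \<sigma> b x \<alpha> p X + c x \<alpha> * r))"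
    by (simp add: Gtop_def Lop_uminus image_image)
  then show ?thesis by (simp add: Gop_def Inf_real_def)
qed

lemma has_derivative_norm_diff_power2:
  fixes y :: "'a::real_inner"
  shows "((\<lambda>x. norm (x - y) ^ 2) has_derivative (\<lambda>h. 2 * ((x - y) \<bullet> h))) (at x)"
proof -
  have "((\<lambda>x. (x - y) \<bullet> (x - y)) has_derivative (\<lambda>h. (x - y) \<bullet> h + h \<bullet> (x - y))) (at x)"
    by (auto intro!: derivative_eq_intros)
  then show ?thesis
    by (simp add: power2_norm_eq_inner[symmetric] inner_commute)
qed

lemma C2_with_radial:
  fixes y :: "real^'n"
  assumes g: "\<And>t. t \<ge> 0 \<Longrightarrow> (g has_real_derivative g1 t) (at t)"
    and g1: "\<And>t. t \<ge> 0 \<Longrightarrow> (g1 has_real_derivative g2 t) (at t)"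
    and g2: "continuous_on {0..} g2"
  shows "C2_with (\<lambda>x. g (norm (x - y) ^ 2)) (\<lambda>x. (2 * g1 (norm (x - y) ^ 2)) *\<^sub>R (x - y))
           (\<lambda>x. (2 * g1 (norm (x - y) ^ 2)) *\<^sub>R mat 1 + (4 * g2 (norm (x - y) ^ 2)) *\<^sub>R outer_product (x - y))"
  unfolding C2_with_def
proof (intro conjI allI)
  fix x :: "real^'n"
  let ?t = "norm (x - y) ^ 2"
  have "((\<lambda>x. g (norm (x - y) ^ 2)) has_derivative (\<lambda>h. g1 ?t * (2 * ((x - y) \<bullet> h)))) (at x)"
    using has_derivative_compose[OF has_derivative_norm_diff_power2 g[unfolded has_field_derivative_def]]
    by simp
  then show "((\<lambda>x. g (norm (x - y) ^ 2)) has_derivative (\<lambda>h. (2 * g1 ?t) *\<^sub>R (x - y) \<bullet> h)) (at x)"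
    by (rule has_derivative_eq_rhs) (auto simp: algebra_simps)
  have g1': "((\<lambda>x. 2 * g1 (norm (x - y) ^ 2)) has_derivative (\<lambda>h. 2 * (g2 ?t * (2 * ((x - y) \<bullet> h))))) (at x)"
    using has_derivative_compose[OF has_derivative_norm_diff_power2 g1[unfolded has_field_derivative_def]]
    by (auto intro!: derivative_eq_intros)
  have "((\<lambda>x. (2 * g1 (norm (x - y) ^ 2)) *\<^sub>R (x - y)) has_derivative
      (\<lambda>h. (2 * g1 ?t) *\<^sub>R h + (2 * (g2 ?t * (2 * ((x - y) \<bullet> h)))) *\<^sub>R (x - y))) (at x)"
    by (rule has_derivative_eq_rhs, rule has_derivative_scaleR[OF g1'], auto intro!: derivative_eq_intros)
  then show "((\<lambda>x. (2 * g1 (norm (x - y) ^ 2)) *\<^sub>R (x - y)) has_derivative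
      (\<lambda>h. ((2 * g1 ?t) *\<^sub>R mat 1 + (4 * g2 ?t) *\<^sub>R outer_product (x - y)) *v h)) (at x)"
    by (rule has_derivative_eq_rhs)
       (auto simp: matrix_vector_mult_add_rdistrib scaleR_matrix_vector_assoc[symmetric]
         outer_product_mult_vec)
next
  have "continuous_on {0..} g1"
    by (intro continuous_at_imp_continuous_on ballI) (auto intro: DERIV_isCont g1)
  then have "continuous_on UNIV (\<lambda>x::real^'n. g1 (norm (x - y) ^ 2))"
    by (rule continuous_on_compose2) (auto intro!: continuous_intros)
  moreover have "continuous_on UNIV (\<lambda>x::real^'n. g2 (norm (x - y) ^ 2))"
    using g2 by (rule continuous_on_compose2) (auto intro!: continuous_intros)
  moreover have "continuous_on UNIV (\<lambda>x::real^'n. outer_product (x - y))"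
    unfolding outer_product_def by (intro continuous_intros)
  ultimately show "continuous_on UNIV (\<lambda>x. (2 * g1 (norm (x - y) ^ 2)) *\<^sub>R mat 1
      + (4 * g2 (norm (x - y) ^ 2)) *\<^sub>R outer_product (x - y))"
    by (intro continuous_intros)
qed

lemma C2_with_uminus:
  assumes "C2_with \<phi> D\<phi> D2\<phi>"
  shows "C2_with (\<lambda>x. - \<phi> x) (\<lambda>x. - D\<phi> x) (\<lambda>x. - D2\<phi> x)"
  unfolding C2_with_def
proof (intro conjI allI)
  fix x
  show "((\<lambda>x. - \<phi> x) has_derivative (\<lambda>h. - D\<phi> x \<bullet> h)) (at x)"
    using assms unfolding C2_with_def by (auto intro: has_derivative_eq_rhs[OF has_derivative_minus])
  have "((\<lambda>x. - D\<phi> x) has_derivative (\<lambda>h. - (D2\<phi> x *v h))) (at x)"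
    using assms unfolding C2_with_def by (auto intro: has_derivative_minus)
  moreover have "(\<lambda>h. - D2\<phi> x *v h) = (\<lambda>h. - (D2\<phi> x *v h))"
    by (simp add: fun_eq_iff matrix_vector_mult_def vec_eq_iff sum_negf)
  ultimately show "((\<lambda>x. - D\<phi> x) has_derivative (\<lambda>h. - D2\<phi> x *v h)) (at x)"
    by simp
next
  show "continuous_on UNIV (\<lambda>x. - D2\<phi> x)"
    using assms unfolding C2_with_def by (auto intro: continuous_on_minus)
qed

section \<open>Upper semicontinuous functions\<close>

lemma usc_iff_lsc_uminus: "usc u \<longleftrightarrow> lsc (\<lambda>x. - u x)"
proof -
  have "{x. u x < t} = {x. - u x > - t}" for t by auto
  then show ?thesis unfolding usc_def lsc_def by (metis minus_minus)
qed

lemma usc_diff_continuous: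
  assumes u: "usc u" and \<phi>: "continuous_on UNIV \<phi>"
  shows "usc (\<lambda>x. u x - \<phi> x)"
  unfolding usc_def
proof
  fix t
  have "{x. u x - \<phi> x < t} = (\<Union>s. {x. u x < s} \<inter> {x. s - t < \<phi> x})"
    by (auto simp: diff_less_eq) (metis add.commute dense)
  moreover have "open {x. s - t < \<phi> x}" for s
    using \<phi> by (simp add: open_Collect_less continuous_on_const)
  ultimately show "open {x. u x - \<phi> x < t}"
    using u unfolding usc_def by (auto intro!: open_Int)
qed

lemma usc_attains_max:
  assumes f: "usc f" and S: "compact S" "S \<noteq> {}"
  obtains x where "x \<in> S" "\<And>y. y \<in> S \<Longrightarrow> f y \<le> f x"
proof (rule ccontr)
  assume "\<not> thesis"
  with that have "S \<subseteq> (\<Union>z\<in>S. {x. f x < f z})" by (force simp: not_le)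
  then obtain C where C: "C \<subseteq> S" "finite C" "S \<subseteq> (\<Union>z\<in>C. {x. f x < f z})"
    using compactE_image[OF S(1), of S "\<lambda>z. {x. f x < f z}"] f unfolding usc_def by metis
  with S(2) have "Max (f ` C) \<in> f ` C" by (intro Max_in) auto
  then obtain z where "z \<in> C" "f z = Max (f ` C)" by auto
  with C obtain w where "w \<in> C" "f z < f w" by blast
  with \<open>f z = Max (f ` C)\<close> C(2) show False by (simp add: leD)
qed

lemma usc_attains_max_on_exterior:
  fixes w :: "'a::heine_borel \<Rightarrow> real"
  assumes w: "usc w" and x: "x \<in> cball y \<rho>2 - ball y \<rho>1"
    and beyond: "\<And>p. \<rho>2 < dist y p \<Longrightarrow> w p \<le> w x"
  obtains x0 where "x0 \<in> cball y \<rho>2 - ball y \<rho>1" "\<And>p. \<rho>1 \<le> dist y p \<Longrightarrow> w p \<le> w x0"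
proof -
  obtain x0 where x0: "x0 \<in> cball y \<rho>2 - ball y \<rho>1"
      "\<And>p. p \<in> cball y \<rho>2 - ball y \<rho>1 \<Longrightarrow> w p \<le> w x0"
    using usc_attains_max[OF w compact_diff[OF compact_cball open_ball]] x by blast
  have "w p \<le> w x0" if "\<rho>1 \<le> dist y p" for p
    using x0(2)[of p] x0(2)[OF x] beyond[of p] that by (cases "dist y p \<le> \<rho>2") auto
  with x0(1) show thesis using that by blast
qed

lemma exterior_max_imp_local_max:
  fixes w :: "'a::metric_space \<Rightarrow> real"
  assumes "\<And>p. \<rho> \<le> dist y p \<Longrightarrow> w p \<le> w x0"
  shows "\<forall>p\<in>ball x0 (dist y x0 - \<rho>). w p \<le> w x0"
proof
  fix p assume "p \<in> ball x0 (dist y x0 - \<rho>)"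
  moreover have "dist y x0 \<le> dist y p + dist x0 p"
    by (metis dist_commute dist_triangle)
  ultimately show "w p \<le> w x0"
    by (intro assms) simp
qed

lemma usc_nearest_point_superlevel:
  fixes u :: "'a::heine_borel \<Rightarrow> real"
  assumes u: "usc u" and "M \<le> u z" "u y < M"
  obtains x1 where "M \<le> u x1" "0 < dist y x1" "\<And>p. dist y p < dist y x1 \<Longrightarrow> u p < M"
proof -
  have "- {x. M \<le> u x} = {x. u x < M}"
    by auto
  then have closed: "closed {x. M \<le> u x}"
    using u unfolding usc_def closed_def by simp
  have nonempty: "{x. M \<le> u x} \<noteq> {}"
    using \<open>M \<le> u z\<close> by blast
  obtain x1 where x1: "x1 \<in> {x. M \<le> u x}" "\<And>p. p \<in> {x. M \<le> u x} \<Longrightarrow> dist y x1 \<le> dist y p"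
    using distance_attains_inf[OF closed nonempty, of y] by metis
  have "y \<noteq> x1"
    using x1(1) \<open>u y < M\<close> by auto
  moreover have "u p < M" if "dist y p < dist y x1" for p
    using x1(2)[of p] that by (meson mem_Collect_eq not_less)
  ultimately show thesis
    using that x1(1) by simp
qed

section \<open>Viscosity subsolutions touched by radial test functions\<close>

lemma visc_sub_GopE:
  assumes "visc_sub (Gop \<sigma> b c) u" "C2_with \<phi> D\<phi> D2\<phi>" "r > 0"
    "\<forall>y\<in>ball x0 r. u y - \<phi> y \<le> u x0 - \<phi> x0" "\<eta> > 0"
  obtains \<alpha> where "c x0 \<alpha> * u x0 - Lop \<sigma> b x0 \<alpha> (D\<phi> x0) (D2\<phi> x0) < \<eta>"
proof -
  have "Gop \<sigma> b c x0 (u x0) (D\<phi> x0) (D2\<phi> x0) \<le> 0"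
    using assms(1-4) unfolding visc_sub_def by blast
  show thesis
  proof (rule ccontr)
    assume "\<not> thesis"
    with that have "\<not> c x0 \<alpha> * u x0 - Lop \<sigma> b x0 \<alpha> (D\<phi> x0) (D2\<phi> x0) < \<eta>" for \<alpha>
      by blast
    then have "\<eta> \<le> - Lop \<sigma> b x0 \<alpha> (D\<phi> x0) (D2\<phi> x0) + c x0 \<alpha> * u x0" for \<alpha>
      by (simp add: not_less)
    then have "\<eta> \<le> Gop \<sigma> b c x0 (u x0) (D\<phi> x0) (D2\<phi> x0)"
      unfolding Gop_def by (intro cINF_greatest) auto
    with \<open>Gop \<sigma> b c x0 (u x0) (D\<phi> x0) (D2\<phi> x0) \<le> 0\<close> \<open>\<eta> > 0\<close> show False
      by linarith
  qed
qed

lemma visc_sub_radial_testE: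
  assumes sub: "visc_sub (Gop \<sigma> b c) u"
    and g: "\<And>t. t \<ge> 0 \<Longrightarrow> (g has_real_derivative g1 t) (at t)"
    and g1: "\<And>t. t \<ge> 0 \<Longrightarrow> (g1 has_real_derivative g2 t) (at t)"
    and g2: "continuous_on {0..} g2"
    and "r > 0" "\<forall>z\<in>ball x0 r. u z - g (norm (z - y) ^ 2) \<le> u x0 - g (norm (x0 - y) ^ 2)"
    and "\<eta> > 0"
  obtains \<alpha> where "c x0 \<alpha> * u x0 - (2 * g1 (norm (x0 - y) ^ 2) * (norm (\<sigma> x0 \<alpha>) ^ 2 + b x0 \<alpha> \<bullet> (x0 - y))
      + 4 * g2 (norm (x0 - y) ^ 2) * ((x0 - y) \<bullet> (diffmat \<sigma> x0 \<alpha> *v (x0 - y)))) < \<eta>"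
proof -
  obtain \<alpha> where "c x0 \<alpha> * u x0 - Lop \<sigma> b x0 \<alpha> ((2 * g1 (norm (x0 - y) ^ 2)) *\<^sub>R (x0 - y))
      ((2 * g1 (norm (x0 - y) ^ 2)) *\<^sub>R mat 1 + (4 * g2 (norm (x0 - y) ^ 2)) *\<^sub>R outer_product (x0 - y)) < \<eta>"
    using visc_sub_GopE[OF sub C2_with_radial[OF g g1 g2] assms(5-7)] .
  then show thesis
    using that by (simp add: Lop_radial distrib_left)
qed

lemma visc_super_imp_visc_sub_uminus:
  assumes "visc_super (Gtop \<sigma> b c) v"
  shows "visc_sub (Gop \<sigma> b c) (\<lambda>x. - v x)"
  unfolding visc_sub_def
proof (intro conjI allI impI)
  show "usc (\<lambda>x. - v x)"
    using assms by (simp add: visc_super_def usc_iff_lsc_uminus)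
next
  fix \<phi> D\<phi> D2\<phi> x0
  assume "C2_with \<phi> D\<phi> D2\<phi> \<and> (\<exists>r>0. \<forall>y\<in>ball x0 r. - v y - \<phi> y \<le> - v x0 - \<phi> x0)"
  then have "C2_with (\<lambda>x. - \<phi> x) (\<lambda>x. - D\<phi> x) (\<lambda>x. - D2\<phi> x)"
      and "\<exists>r>0. \<forall>y\<in>ball x0 r. v x0 - - \<phi> x0 \<le> v y - - \<phi> y"
    by (auto intro: C2_with_uminus) fastforce
  then have "Gtop \<sigma> b c x0 (v x0) (- D\<phi> x0) (- D2\<phi> x0) \<ge> 0"
    using assms unfolding visc_super_def by blast
  then show "Gop \<sigma> b c x0 (- v x0) (D\<phi> x0) (D2\<phi> x0) \<le> 0"
    by (simp add: Gop_eq_uminus_Gtop)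
qed

definition log_quadratic :: "real \<Rightarrow> real" where
  "log_quadratic t = t / 2 + ln (1 + t / 2)"

lemma log_quadratic_ge: "0 \<le> t \<Longrightarrow> t / 2 \<le> log_quadratic t"
  by (simp add: log_quadratic_def)

lemma mult_deriv_le_log_quadratic: "0 \<le> t \<Longrightarrow> t * (1 / 2 + 1 / (2 + t)) \<le> log_quadratic t"
  using ln_add1_ge[of "t / 2"] by (simp add: log_quadratic_def field_simps)

lemma has_real_derivative_log_quadratic:
  "0 \<le> t \<Longrightarrow> (log_quadratic has_real_derivative 1 / 2 + 1 / (2 + t)) (at t)"
  unfolding log_quadratic_def by (auto intro!: derivative_eq_intros simp: field_simps)

lemma continuous_on_log_quadratic_norm:
  "continuous_on UNIV (\<lambda>x::'a::real_normed_vector. log_quadratic (norm x ^ 2))"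
proof -
  have "1 + norm x ^ 2 / 2 \<noteq> 0" for x :: 'a
    using zero_le_power2[of "norm x"] by linarith
  then show ?thesis
    unfolding log_quadratic_def by (intro continuous_intros) auto
qed

lemma visc_sub_log_quadratic_testE:
  assumes sub: "visc_sub (Gop \<sigma> b c) u" and "0 < r" "0 < \<eta>"
    and max: "\<forall>z\<in>ball x0 r.
      u z - \<epsilon> * log_quadratic (norm z ^ 2) \<le> u x0 - \<epsilon> * log_quadratic (norm x0 ^ 2)"
  defines "t \<equiv> norm x0 ^ 2"
  obtains \<alpha> where "c x0 \<alpha> * u x0 - 2 * \<epsilon> * (1 / 2 + 1 / (2 + t)) * (norm (\<sigma> x0 \<alpha>) ^ 2 + b x0 \<alpha> \<bullet> x0)
      + 4 * \<epsilon> / (2 + t) ^ 2 * (x0 \<bullet> (diffmat \<sigma> x0 \<alpha> *v x0)) < \<eta>"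
proof -
  define g1 where "g1 = (\<lambda>t::real. \<epsilon> * (1 / 2 + 1 / (2 + t)))"
  define g2 where "g2 = (\<lambda>t::real. - \<epsilon> / (2 + t) ^ 2)"
  have d1: "((\<lambda>t. \<epsilon> * log_quadratic t) has_real_derivative g1 t) (at t)" if "0 \<le> t" for t
    using has_real_derivative_log_quadratic[OF that] unfolding g1_def by (rule DERIV_cmult)
  have d2: "(g1 has_real_derivative g2 t) (at t)" if "0 \<le> t" for t
  proof -
    have "((\<lambda>t. 1 / 2 + 1 / (2 + t)) has_real_derivative - 1 / (2 + t) ^ 2) (at t)"
      using that by (auto intro!: derivative_eq_intros simp: power2_eq_square)
    then show ?thesis
      unfolding g1_def g2_def using DERIV_cmult[where c = \<epsilon>] by fastforce
  qed
  have d3: "continuous_on {0..} g2"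
    unfolding g2_def by (intro continuous_intros) auto
  have max0: "\<forall>z\<in>ball x0 r. u z - \<epsilon> * log_quadratic (norm (z - 0) ^ 2)
      \<le> u x0 - \<epsilon> * log_quadratic (norm (x0 - 0) ^ 2)"
    using max by simp
  obtain \<alpha> where "c x0 \<alpha> * u x0 - (2 * g1 t * (norm (\<sigma> x0 \<alpha>) ^ 2 + b x0 \<alpha> \<bullet> x0)
      + 4 * g2 t * (x0 \<bullet> (diffmat \<sigma> x0 \<alpha> *v x0))) < \<eta>"
    using visc_sub_radial_testE[OF sub d1 d2 d3 \<open>0 < r\<close> max0 \<open>0 < \<eta>\<close>] by (auto simp: t_def)
  then show thesis
    using that by (simp add: g1_def g2_def algebra_simps)
qed

lemma visc_sub_exp_barrier_testE:
  assumes sub: "visc_sub (Gop \<sigma> b c) u" and "0 < r" "0 < \<eta>"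
    and max: "\<forall>p\<in>ball x0 r.
      u p + \<delta> * exp (- \<kappa> * norm (p - y) ^ 2) \<le> u x0 + \<delta> * exp (- \<kappa> * norm (x0 - y) ^ 2)"
  defines "G \<equiv> \<delta> * \<kappa> * exp (- \<kappa> * norm (x0 - y) ^ 2)"
  obtains \<alpha> where "c x0 \<alpha> * u x0 - 2 * G * (norm (\<sigma> x0 \<alpha>) ^ 2 + b x0 \<alpha> \<bullet> (x0 - y))
      + 4 * \<kappa> * G * ((x0 - y) \<bullet> (diffmat \<sigma> x0 \<alpha> *v (x0 - y))) < \<eta>"
proof -
  have d1: "((\<lambda>t. - \<delta> * exp (- \<kappa> * t)) has_real_derivative \<delta> * \<kappa> * exp (- \<kappa> * t)) (at t)" for t
    by (auto intro!: derivative_eq_intros)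
  have d2: "((\<lambda>t. \<delta> * \<kappa> * exp (- \<kappa> * t))
      has_real_derivative - \<kappa> * (\<delta> * \<kappa> * exp (- \<kappa> * t))) (at t)" for t
    by (auto intro!: derivative_eq_intros)
  have d3: "continuous_on {0..} (\<lambda>t. - \<kappa> * (\<delta> * \<kappa> * exp (- \<kappa> * t)))"
    by (intro continuous_intros)
  have max': "\<forall>p\<in>ball x0 r. u p - - \<delta> * exp (- \<kappa> * norm (p - y) ^ 2)
      \<le> u x0 - - \<delta> * exp (- \<kappa> * norm (x0 - y) ^ 2)"
    using max by simp
  obtain \<alpha> where "c x0 \<alpha> * u x0 - (2 * G * (norm (\<sigma> x0 \<alpha>) ^ 2 + b x0 \<alpha> \<bullet> (x0 - y))
      + 4 * (- \<kappa> * G) * ((x0 - y) \<bullet> (diffmat \<sigma> x0 \<alpha> *v (x0 - y)))) < \<eta>"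
    using visc_sub_radial_testE[OF sub d1 d2 d3 \<open>0 < r\<close> max' \<open>0 < \<eta>\<close>] by (auto simp: G_def)
  then show thesis
    using that by (simp add: algebra_simps)
qed

lemma Limsup_quadratic_eventually_less:
  fixes u :: "'a::real_normed_vector \<Rightarrow> real"
  assumes "Limsup at_infinity (\<lambda>x. ereal (u x / norm x ^ 2)) \<le> 0" "\<epsilon> > 0"
  shows "\<forall>\<^sub>F x in at_infinity. u x < \<epsilon> * norm x ^ 2 + M"
proof -
  have "Limsup at_infinity (\<lambda>x. ereal (u x / norm x ^ 2)) < ereal (\<epsilon> / 2)"
    using assms by (simp add: le_less_trans)
  then have "\<forall>\<^sub>F x in at_infinity. u x / norm x ^ 2 < \<epsilon> / 2"
    by (auto dest: Limsup_lessD)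
  moreover have "filterlim (\<lambda>x::'a. norm x ^ 2) at_top at_infinity"
    by (rule filterlim_pow_at_top[OF _ filterlim_norm_at_top]) simp
  then have "\<forall>\<^sub>F x::'a in at_infinity. max 0 (- 2 * M / \<epsilon>) < norm x ^ 2"
    by (rule filterlim_at_top_dense[THEN iffD1, rule_format])
  ultimately show ?thesis
  proof eventually_elim
    case (elim x)
    then have "u x < \<epsilon> / 2 * norm x ^ 2" "- 2 * M / \<epsilon> < norm x ^ 2"
      by (simp_all add: divide_less_eq)
    with \<open>\<epsilon> > 0\<close> show ?case by (simp add: field_simps)
  qed
qed

lemma log_quadratic_touching_point:
  fixes u :: "'a::euclidean_space \<Rightarrow> real"
  assumes u: "usc u" and growth: "Limsup at_infinity (\<lambda>x. ereal (u x / norm x ^ 2)) \<le> 0"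
    and inner: "\<And>x. norm x \<le> R \<Longrightarrow> u x \<le> M" and "M < u x"
  obtains \<epsilon> x0 where "0 < \<epsilon>" "R < norm x0" "\<epsilon> * log_quadratic (norm x0 ^ 2) < u x0 - M"
    "\<forall>p\<in>ball x0 (norm x0 - R).
       u p - \<epsilon> * log_quadratic (norm p ^ 2) \<le> u x0 - \<epsilon> * log_quadratic (norm x0 ^ 2)"
proof -
  define h where "h = (\<lambda>y::'a. log_quadratic (norm y ^ 2))"
  have h1: "norm y ^ 2 / 2 \<le> h y" for y
    using log_quadratic_ge by (simp add: h_def)
  have h0: "0 \<le> h y" for y
    using order_trans[OF _ h1[of y], of 0] by simp
  define \<epsilon> where "\<epsilon> = (u x - M) / (h x + 1)"
  have \<epsilon>: "0 < \<epsilon>" "\<epsilon> * h x < u x - M"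
    using \<open>M < u x\<close> h0[of x] by (auto simp: \<epsilon>_def field_simps)
  define w where "w = (\<lambda>y. u y - \<epsilon> * h y)"
  have "usc w"
    unfolding w_def h_def
    by (intro usc_diff_continuous u continuous_intros continuous_on_log_quadratic_norm)
  obtain R2 where R2: "\<And>y. R2 \<le> norm y \<Longrightarrow> u y < \<epsilon> / 2 * norm y ^ 2 + M"
    using Limsup_quadratic_eventually_less[OF growth, of "\<epsilon> / 2" M] \<epsilon>(1)
    by (auto simp: eventually_at_infinity)
  have "M < w x"
    using \<epsilon>(2) by (simp add: w_def)
  have "R < norm x"
    using inner[of x] \<open>M < u x\<close> by (cases "R < norm x") auto
  then have "x \<in> cball 0 (max R2 (norm x)) - ball 0 R"
    by simp
  moreover have "w p \<le> w x" if "max R2 (norm x) < dist 0 p" for p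
    using R2[of p] that mult_left_mono[OF h1[of p] less_imp_le[OF \<epsilon>(1)]] \<open>M < w x\<close>
    by (simp add: w_def)
  ultimately obtain x0 where x0: "\<And>p. R \<le> dist 0 p \<Longrightarrow> w p \<le> w x0"
    using usc_attains_max_on_exterior[OF \<open>usc w\<close>] by metis
  have "M < w x0"
    using x0[of x] \<open>R < norm x\<close> \<open>M < w x\<close> by simp
  then have "\<epsilon> * h x0 < u x0 - M"
    by (simp add: w_def)
  moreover have "0 \<le> \<epsilon> * h x0"
    using \<epsilon>(1) h0[of x0] by simp
  ultimately have "R < norm x0"
    using inner[of x0] by (cases "R < norm x0") auto
  moreover have "\<forall>p\<in>ball x0 (norm x0 - R).
      u p - \<epsilon> * log_quadratic (norm p ^ 2) \<le> u x0 - \<epsilon> * log_quadratic (norm x0 ^ 2)"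
    using exterior_max_imp_local_max[of R 0 w x0] x0 by (simp add: w_def h_def)
  ultimately show thesis
    using that \<epsilon>(1) \<open>\<epsilon> * h x0 < u x0 - M\<close> by (simp add: h_def)
qed

lemma exp_barrier_touching_point:
  fixes u :: "'a::euclidean_space \<Rightarrow> real"
  assumes u: "usc u" and below: "\<And>p. u p \<le> M" and x1: "M \<le> u x1" "dist y x1 = \<rho>"
    and sphere: "\<And>p. dist y p = \<rho> / 2 \<Longrightarrow> u p + \<delta> < M"
    and "0 < \<delta>" "0 \<le> \<kappa>"
  obtains x0 where "\<rho> / 2 < dist y x0" "dist y x0 \<le> \<rho>"
    "\<forall>p\<in>ball x0 (dist y x0 - \<rho> / 2).
       u p + \<delta> * exp (- \<kappa> * norm (p - y) ^ 2) \<le> u x0 + \<delta> * exp (- \<kappa> * norm (x0 - y) ^ 2)"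
proof -
  define w where "w = (\<lambda>p. u p + \<delta> * exp (- \<kappa> * norm (p - y) ^ 2))"
  have "usc w"
    using usc_diff_continuous[OF u, of "\<lambda>p. - \<delta> * exp (- \<kappa> * norm (p - y) ^ 2)"]
    by (simp add: w_def continuous_intros)
  have "\<rho> \<ge> 0"
    using x1(2) by auto
  then have x1_annulus: "x1 \<in> cball y \<rho> - ball y (\<rho> / 2)"
    using x1(2) by simp
  have "w p \<le> w x1" if "\<rho> < dist y p" for p
  proof -
    have "\<rho> ^ 2 \<le> norm (p - y) ^ 2"
      using that \<open>\<rho> \<ge> 0\<close> by (simp add: dist_norm norm_minus_commute power_mono)
    then have "\<delta> * exp (- \<kappa> * norm (p - y) ^ 2) \<le> \<delta> * exp (- \<kappa> * norm (x1 - y) ^ 2)"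
      using \<open>0 \<le> \<kappa>\<close> \<open>0 < \<delta>\<close> x1(2)
      by (intro mult_left_mono) (auto simp: dist_norm norm_minus_commute mult_left_mono)
    then show ?thesis
      using below[of p] x1(1) by (simp add: w_def)
  qed
  then obtain x0 where x0: "x0 \<in> cball y \<rho> - ball y (\<rho> / 2)" "\<And>p. \<rho> / 2 \<le> dist y p \<Longrightarrow> w p \<le> w x0"
    using usc_attains_max_on_exterior[OF \<open>usc w\<close> x1_annulus] by blast
  have "w p < w x0" if "dist y p = \<rho> / 2" for p
  proof -
    have "w p \<le> u p + \<delta>"
      using \<open>0 < \<delta>\<close> \<open>0 \<le> \<kappa>\<close> by (simp add: w_def)
    also have "\<dots> < u x1"
      using sphere[OF that] x1(1) by linarith
    also have "\<dots> < w x1"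
      using \<open>0 < \<delta>\<close> by (simp add: w_def)
    also have "\<dots> \<le> w x0"
      using x0(2) x1_annulus by simp
    finally show ?thesis .
  qed
  then have "\<rho> / 2 < dist y x0"
    using x0 by force
  with x0 exterior_max_imp_local_max[of "\<rho> / 2" y w x0] show thesis
    using that by (simp add: w_def)
qed

section \<open>The Liouville argument\<close>

locale hjb_coefficients =
  fixes \<sigma> :: "real^'n \<Rightarrow> 'a \<Rightarrow> real^'m^'n"
    and b :: "real^'n \<Rightarrow> 'a \<Rightarrow> real^'n"
    and c :: "real^'n \<Rightarrow> 'a \<Rightarrow> real"
  assumes locally_bounded: "\<exists>K\<ge>0. \<forall>x \<alpha>. norm x \<le> R \<longrightarrow> norm (\<sigma> x \<alpha>) \<le> K \<and> norm (b x \<alpha>) \<le> K"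
    and c_nonneg: "0 \<le> c x \<alpha>"
    and locally_elliptic: "\<exists>K>0. \<forall>\<xi> x \<alpha>. norm x \<le> R \<longrightarrow> norm \<xi> ^ 2 / K \<le> \<xi> \<bullet> (diffmat \<sigma> x \<alpha> *v \<xi>)"
begin

lemma drift_le_of_SUP_le:
  assumes "(SUP \<alpha>. trace (diffmat \<sigma> x \<alpha>) + b x \<alpha> \<bullet> x - c x \<alpha> * norm x ^ 2 / 2) \<le> 0"
  shows "norm (\<sigma> x \<alpha>) ^ 2 + b x \<alpha> \<bullet> x \<le> c x \<alpha> * norm x ^ 2 / 2"
proof -
  obtain K where K: "\<And>\<alpha>. norm (\<sigma> x \<alpha>) \<le> K \<and> norm (b x \<alpha>) \<le> K"
    using locally_bounded[of "norm x"] by auto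
  let ?f = "\<lambda>\<alpha>. trace (diffmat \<sigma> x \<alpha>) + b x \<alpha> \<bullet> x - c x \<alpha> * norm x ^ 2 / 2"
  have "?f \<alpha> \<le> K ^ 2 + K * norm x" for \<alpha>
  proof -
    have "norm (\<sigma> x \<alpha>) ^ 2 \<le> K ^ 2"
      using K by (simp add: power_mono)
    moreover have "b x \<alpha> \<bullet> x \<le> K * norm x"
      using norm_cauchy_schwarz[of "b x \<alpha>" x] K[of \<alpha>] mult_right_mono[of "norm (b x \<alpha>)" K "norm x"]
      by simp
    moreover have "0 \<le> c x \<alpha> * norm x ^ 2 / 2"
      using c_nonneg[of x \<alpha>] by simp
    ultimately show ?thesis
      by (simp add: trace_diffmat)
  qed
  then have "?f \<alpha> \<le> (SUP \<alpha>. ?f \<alpha>)"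
    by (intro cSUP_upper bdd_aboveI2) auto
  with assms show ?thesis
    by (simp add: trace_diffmat)
qed

lemma log_quadratic_test_contradiction:
  assumes sub: "visc_sub (Gop \<sigma> b c) u"
    and drift: "\<And>\<alpha>. norm (\<sigma> x0 \<alpha>) ^ 2 + b x0 \<alpha> \<bullet> x0 \<le> c x0 \<alpha> * norm x0 ^ 2 / 2"
    and "x0 \<noteq> 0" "0 < \<epsilon>" "0 < r"
    and max: "\<forall>z\<in>ball x0 r.
      u z - \<epsilon> * log_quadratic (norm z ^ 2) \<le> u x0 - \<epsilon> * log_quadratic (norm x0 ^ 2)"
    and sgn: "(\<forall>\<alpha>. c x0 \<alpha> = 0) \<or> \<epsilon> * log_quadratic (norm x0 ^ 2) \<le> u x0"
  shows False
proof -
  define t where "t = norm x0 ^ 2"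
  define D where "D = \<epsilon> * (1 / 2 + 1 / (2 + t))"
  have "0 < t"
    using \<open>x0 \<noteq> 0\<close> by (simp add: t_def)
  then have "0 < D"
    using \<open>0 < \<epsilon>\<close> by (simp add: D_def add_pos_pos)
  obtain K where K: "0 < K" "\<And>\<alpha>. t / K \<le> x0 \<bullet> (diffmat \<sigma> x0 \<alpha> *v x0)"
    using locally_elliptic[of "norm x0"] by (auto simp: t_def)
  define \<eta> where "\<eta> = 4 * \<epsilon> / (2 + t) ^ 2 * (t / K)"
  have "0 < \<eta>"
    using \<open>0 < \<epsilon>\<close> \<open>0 < t\<close> K(1) by (simp add: \<eta>_def)
  obtain \<alpha> where \<alpha>: "c x0 \<alpha> * u x0 - 2 * D * (norm (\<sigma> x0 \<alpha>) ^ 2 + b x0 \<alpha> \<bullet> x0)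
      + 4 * \<epsilon> / (2 + t) ^ 2 * (x0 \<bullet> (diffmat \<sigma> x0 \<alpha> *v x0)) < \<eta>"
    using visc_sub_log_quadratic_testE[OF sub \<open>0 < r\<close> \<open>0 < \<eta>\<close> max] by (auto simp: D_def t_def mult.assoc)
  have "2 * D * (norm (\<sigma> x0 \<alpha>) ^ 2 + b x0 \<alpha> \<bullet> x0) \<le> c x0 \<alpha> * (D * t)"
    using mult_left_mono[OF drift[of \<alpha>], of "2 * D"] \<open>0 < D\<close> by (simp add: t_def)
  moreover have "\<eta> \<le> 4 * \<epsilon> / (2 + t) ^ 2 * (x0 \<bullet> (diffmat \<sigma> x0 \<alpha> *v x0))"
    unfolding \<eta>_def using \<open>0 < \<epsilon>\<close> K(2) by (intro mult_left_mono) auto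
  moreover have "c x0 \<alpha> * (D * t) \<le> c x0 \<alpha> * u x0"
    using sgn
  proof
    assume "\<epsilon> * log_quadratic (norm x0 ^ 2) \<le> u x0"
    moreover have "D * t \<le> \<epsilon> * log_quadratic t"
      using mult_left_mono[OF mult_deriv_le_log_quadratic, of t \<epsilon>] \<open>0 < t\<close> \<open>0 < \<epsilon>\<close>
      by (simp add: D_def algebra_simps)
    ultimately show ?thesis
      using c_nonneg by (intro mult_left_mono) (auto simp: t_def)
  qed simp
  ultimately show False
    using \<alpha> by linarith
qed

lemma visc_sub_attains_max:
  assumes sub: "visc_sub (Gop \<sigma> b c) u"
    and growth: "Limsup at_infinity (\<lambda>x. ereal (u x / norm x ^ 2)) \<le> 0"
    and sgn: "(\<forall>x. u x \<ge> 0) \<or> (\<forall>x \<alpha>. c x \<alpha> = 0)"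
    and lyapunov: "\<And>x. Ro \<le> norm x \<Longrightarrow>
      (SUP \<alpha>. trace (diffmat \<sigma> x \<alpha>) + b x \<alpha> \<bullet> x - c x \<alpha> * norm x ^ 2 / 2) \<le> 0"
  obtains z where "\<And>x. u x \<le> u z"
proof -
  define R where "R = max Ro 0"
  have usc: "usc u"
    using sub by (simp add: visc_sub_def)
  obtain z where z: "\<And>x. norm x \<le> R \<Longrightarrow> u x \<le> u z"
    using usc_attains_max[OF usc compact_cball, of 0 R] by (auto simp: R_def)
  have "u x \<le> u z" for x
  proof (rule ccontr)
    assume "\<not> u x \<le> u z"
    then obtain \<epsilon> x0 where "0 < \<epsilon>" "R < norm x0"
      and above: "\<epsilon> * log_quadratic (norm x0 ^ 2) < u x0 - u z"
      and max: "\<forall>p\<in>ball x0 (norm x0 - R).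
        u p - \<epsilon> * log_quadratic (norm p ^ 2) \<le> u x0 - \<epsilon> * log_quadratic (norm x0 ^ 2)"
      using log_quadratic_touching_point[OF usc growth z] by (metis not_le)
    have "(\<forall>\<alpha>. c x0 \<alpha> = 0) \<or> \<epsilon> * log_quadratic (norm x0 ^ 2) \<le> u x0"
      using sgn
    proof
      assume "\<forall>x. u x \<ge> 0"
      then have "0 \<le> u z"
        by simp
      with above show ?thesis
        by simp
    qed simp
    moreover have "Ro \<le> norm x0" "x0 \<noteq> 0" "0 < norm x0 - R"
      using \<open>R < norm x0\<close> by (auto simp: R_def)
    ultimately show False
      using log_quadratic_test_contradiction[OF sub drift_le_of_SUP_le[OF lyapunov] _ \<open>0 < \<epsilon>\<close> _ max]
      by blast
  qed
  with that show thesis by blast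
qed

lemma exp_barrier_test_contradiction:
  assumes sub: "visc_sub (Gop \<sigma> b c) u"
    and "0 < \<delta>" "0 < r"
    and max: "\<forall>p\<in>ball x0 r.
      u p + \<delta> * exp (- \<kappa> * norm (p - y) ^ 2) \<le> u x0 + \<delta> * exp (- \<kappa> * norm (x0 - y) ^ 2)"
    and near: "\<rho> / 2 \<le> norm (x0 - y)" "norm (x0 - y) \<le> \<rho>"
    and bound: "0 \<le> K" "\<And>\<alpha>. norm (\<sigma> x0 \<alpha>) \<le> K \<and> norm (b x0 \<alpha>) \<le> K"
    and elliptic: "0 < K'" "\<And>\<xi> \<alpha>. norm \<xi> ^ 2 / K' \<le> \<xi> \<bullet> (diffmat \<sigma> x0 \<alpha> *v \<xi>)"
    and large: "2 * K' * (K ^ 2 + K * \<rho> + 1) \<le> \<kappa> * \<rho> ^ 2"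
    and sgn: "\<And>\<alpha>. 0 \<le> c x0 \<alpha> * u x0"
  shows False
proof -
  define v where "v = x0 - y"
  define G where "G = \<delta> * \<kappa> * exp (- \<kappa> * norm v ^ 2)"
  have "0 \<le> \<rho>"
    using near(2) norm_ge_zero[of "x0 - y"] by linarith
  then have "0 < \<kappa> * \<rho> ^ 2"
    using large \<open>0 < K'\<close> \<open>0 \<le> K\<close> by (smt (verit) mult_pos_pos zero_le_mult_iff zero_le_power2)
  then have "0 < \<kappa>"
    by (simp add: zero_less_mult_iff)
  then have "0 < G"
    using \<open>0 < \<delta>\<close> by (simp add: G_def)
  then have "0 < 2 * G"
    by simp
  obtain \<alpha> where \<alpha>: "c x0 \<alpha> * u x0 - 2 * G * (norm (\<sigma> x0 \<alpha>) ^ 2 + b x0 \<alpha> \<bullet> v)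
      + 4 * \<kappa> * G * (v \<bullet> (diffmat \<sigma> x0 \<alpha> *v v)) < 2 * G"
    using visc_sub_exp_barrier_testE[OF sub \<open>0 < r\<close> \<open>0 < 2 * G\<close> max]
    unfolding G_def v_def by blast
  have drift: "norm (\<sigma> x0 \<alpha>) ^ 2 + b x0 \<alpha> \<bullet> v \<le> K ^ 2 + K * \<rho>"
  proof -
    have "b x0 \<alpha> \<bullet> v \<le> norm (b x0 \<alpha>) * norm v"
      by (rule norm_cauchy_schwarz)
    also have "\<dots> \<le> K * \<rho>"
      using bound near by (intro mult_mono) (auto simp: v_def)
    finally show ?thesis
      using bound(2)[of \<alpha>] by (simp add: power_mono add_mono)
  qed
  have diffusion: "2 * (K ^ 2 + K * \<rho> + 1) \<le> 4 * \<kappa> * (v \<bullet> (diffmat \<sigma> x0 \<alpha> *v v))"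
  proof -
    have "(\<rho> / 2) ^ 2 \<le> norm v ^ 2"
      using near \<open>0 \<le> \<rho>\<close> by (intro power_mono) (auto simp: v_def)
    then have "\<rho> ^ 2 / K' \<le> 4 * (v \<bullet> (diffmat \<sigma> x0 \<alpha> *v v))"
      using elliptic(2)[of v \<alpha>] divide_right_mono[of "(\<rho> / 2) ^ 2" "norm v ^ 2" K'] \<open>0 < K'\<close>
      by (simp add: power_divide)
    from mult_left_mono[OF this less_imp_le[OF \<open>0 < \<kappa>\<close>]]
    have "\<kappa> * (\<rho> ^ 2 / K') \<le> 4 * \<kappa> * (v \<bullet> (diffmat \<sigma> x0 \<alpha> *v v))"
      by (simp add: ac_simps)
    moreover have "2 * (K ^ 2 + K * \<rho> + 1) \<le> \<kappa> * (\<rho> ^ 2 / K')"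
      using large \<open>0 < K'\<close> by (simp add: field_simps)
    ultimately show ?thesis
      by linarith
  qed
  have "2 * G * (norm (\<sigma> x0 \<alpha>) ^ 2 + b x0 \<alpha> \<bullet> v) \<le> 2 * G * (K ^ 2 + K * \<rho>)"
    using mult_left_mono[OF drift] \<open>0 < G\<close> by simp
  moreover have "2 * G * (K ^ 2 + K * \<rho> + 1) \<le> 4 * \<kappa> * G * (v \<bullet> (diffmat \<sigma> x0 \<alpha> *v v))"
    using mult_left_mono[OF diffusion, of G] \<open>0 < G\<close> by (simp add: ac_simps)
  ultimately show False
    using \<alpha> sgn[of \<alpha>] by (simp add: algebra_simps)
qed

lemma visc_sub_strong_max_principle:
  assumes sub: "visc_sub (Gop \<sigma> b c) u"
    and sgn: "(\<forall>x. u x \<ge> 0) \<or> (\<forall>x \<alpha>. c x \<alpha> = 0)"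
    and max: "\<And>x. u x \<le> u z"
  shows "u y = u z"
proof (rule ccontr)
  assume "u y \<noteq> u z"
  with max[of y] have "u y < u z"
    by simp
  have usc: "usc u"
    using sub by (simp add: visc_sub_def)
  obtain x1 where x1: "u z \<le> u x1" "0 < dist y x1" "\<And>p. dist y p < dist y x1 \<Longrightarrow> u p < u z"
    using usc_nearest_point_superlevel[OF usc order_refl \<open>u y < u z\<close>] by blast
  define \<rho> where "\<rho> = dist y x1"
  have "0 < \<rho>"
    using x1(2) by (simp add: \<rho>_def)
  obtain p1 where p1: "p1 \<in> sphere y (\<rho> / 2)" "\<And>p. p \<in> sphere y (\<rho> / 2) \<Longrightarrow> u p \<le> u p1"
    using usc_attains_max[OF usc compact_sphere, of y "\<rho> / 2"] \<open>0 < \<rho>\<close> by auto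
  define \<delta> where "\<delta> = (u z - u p1) / 2"
  have "dist y p1 < \<rho>"
    using p1(1) \<open>0 < \<rho>\<close> by simp
  then have "0 < \<delta>"
    using x1(3) by (simp add: \<delta>_def \<rho>_def)
  have sphere: "u p + \<delta> < u z" if "dist y p = \<rho> / 2" for p
    using p1(2)[of p] that \<open>0 < \<delta>\<close> by (simp add: \<delta>_def field_simps)
  obtain K where K: "0 \<le> K" "\<And>q \<alpha>. norm q \<le> norm y + \<rho> \<Longrightarrow> norm (\<sigma> q \<alpha>) \<le> K \<and> norm (b q \<alpha>) \<le> K"
    using locally_bounded by blast
  obtain K' where K': "0 < K'"
    "\<And>\<xi> q \<alpha>. norm q \<le> norm y + \<rho> \<Longrightarrow> norm \<xi> ^ 2 / K' \<le> \<xi> \<bullet> (diffmat \<sigma> q \<alpha> *v \<xi>)"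
    using locally_elliptic by blast
  define \<kappa> where "\<kappa> = 2 * K' * (K ^ 2 + K * \<rho> + 1) / \<rho> ^ 2"
  have "0 \<le> \<kappa>"
    using K(1) K'(1) \<open>0 < \<rho>\<close> by (simp add: \<kappa>_def)
  obtain x0 where x0: "\<rho> / 2 < dist y x0" "dist y x0 \<le> \<rho>"
    "\<forall>p\<in>ball x0 (dist y x0 - \<rho> / 2).
       u p + \<delta> * exp (- \<kappa> * norm (p - y) ^ 2) \<le> u x0 + \<delta> * exp (- \<kappa> * norm (x0 - y) ^ 2)"
    using exp_barrier_touching_point[OF usc max x1(1) \<rho>_def[symmetric] sphere \<open>0 < \<delta>\<close> \<open>0 \<le> \<kappa>\<close>]
    by blast
  have near: "\<rho> / 2 \<le> norm (x0 - y)" "norm (x0 - y) \<le> \<rho>"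
    using x0(1,2) by (simp_all add: dist_norm norm_minus_commute)
  have "norm x0 \<le> norm y + \<rho>"
    using norm_triangle_ineq[of "x0 - y" y] near(2) by simp
  moreover have "2 * K' * (K ^ 2 + K * \<rho> + 1) \<le> \<kappa> * \<rho> ^ 2"
    using \<open>0 < \<rho>\<close> by (simp add: \<kappa>_def)
  moreover have "0 \<le> c x0 \<alpha> * u x0" for \<alpha>
    using sgn c_nonneg by auto
  moreover have "0 < dist y x0 - \<rho> / 2"
    using x0(1) by simp
  ultimately show False
    using exp_barrier_test_contradiction[OF sub \<open>0 < \<delta>\<close> _ x0(3) near K(1) _ K'(1)] K(2) K'(2)
    by blast
qed


lemma visc_sub_constant:
  assumes sub: "visc_sub (Gop \<sigma> b c) u"
    and growth: "Limsup at_infinity (\<lambda>x. ereal (u x / norm x ^ 2)) \<le> 0"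
    and sgn: "(\<forall>x. u x \<ge> 0) \<or> (\<forall>x \<alpha>. c x \<alpha> = 0)"
    and lyapunov: "\<And>x. Ro \<le> norm x \<Longrightarrow>
      (SUP \<alpha>. trace (diffmat \<sigma> x \<alpha>) + b x \<alpha> \<bullet> x - c x \<alpha> * norm x ^ 2 / 2) \<le> 0"
  shows "\<exists>k. \<forall>x. u x = k"
proof -
  obtain z where "\<And>x. u x \<le> u z"
    using visc_sub_attains_max[OF sub growth sgn lyapunov] by blast
  then show ?thesis
    using visc_sub_strong_max_principle[OF sub sgn] by blast
qed

lemma visc_super_constant:
  assumes super: "visc_super (Gtop \<sigma> b c) v"
    and growth: "Liminf at_infinity (\<lambda>x. ereal (v x / norm x ^ 2)) \<ge> 0"
    and sgn: "(\<forall>x. v x \<le> 0) \<or> (\<forall>x \<alpha>. c x \<alpha> = 0)"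
    and lyapunov: "\<And>x. Ro \<le> norm x \<Longrightarrow>
      (SUP \<alpha>. trace (diffmat \<sigma> x \<alpha>) + b x \<alpha> \<bullet> x - c x \<alpha> * norm x ^ 2 / 2) \<le> 0"
  shows "\<exists>k. \<forall>x. v x = k"
proof -
  have "Limsup at_infinity (\<lambda>x. ereal (- v x / norm x ^ 2))
      = - Liminf at_infinity (\<lambda>x. ereal (v x / norm x ^ 2))"
    using ereal_Limsup_uminus[of at_infinity "\<lambda>x. ereal (v x / norm x ^ 2)"] by simp
  then obtain k where "\<forall>x. - v x = k"
    using visc_sub_constant[OF visc_super_imp_visc_sub_uminus[OF super] _ _ lyapunov] growth sgn
    by fastforce
  then show ?thesis
    by (metis minus_equation_iff)
qed

end

lemma hjb_coefficientsI:
  assumes bounded: "\<forall>R>0. \<exists>K. \<forall>x \<alpha>. norm x \<le> R \<longrightarrow> norm (\<sigma> x \<alpha>) + norm (b x \<alpha>) + \<bar>c x \<alpha>\<bar> \<le> K"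
    and "\<forall>x \<alpha>. 0 \<le> c x \<alpha>"
    and elliptic: "\<forall>R>0. \<exists>K>0. \<forall>\<xi> x \<alpha>. norm x \<le> R \<longrightarrow> norm \<xi> ^ 2 / K \<le> \<xi> \<bullet> (diffmat \<sigma> x \<alpha> *v \<xi>)"
  shows "hjb_coefficients \<sigma> b c"
proof
  fix R :: real and x \<alpha>
  obtain K where K: "\<And>x \<alpha>. norm x \<le> max R 1 \<Longrightarrow> norm (\<sigma> x \<alpha>) + norm (b x \<alpha>) + \<bar>c x \<alpha>\<bar> \<le> K"
    using bounded by (meson less_max_iff_disj zero_less_one)
  have "norm (\<sigma> x \<alpha>) \<le> K \<and> norm (b x \<alpha>) \<le> K" if "norm x \<le> max R 1" for x \<alpha>
    using K[of x \<alpha>, OF that] norm_ge_zero[of "\<sigma> x \<alpha>"] norm_ge_zero[of "b x \<alpha>"] abs_ge_zero[of "c x \<alpha>"]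
    by linarith
  then show "\<exists>K\<ge>0. \<forall>x \<alpha>. norm x \<le> R \<longrightarrow> norm (\<sigma> x \<alpha>) \<le> K \<and> norm (b x \<alpha>) \<le> K"
    by (intro exI[of _ "max K 0"]) (auto simp: le_max_iff_disj)
  show "0 \<le> c x \<alpha>"
    using assms(2) by blast
  show "\<exists>K>0. \<forall>\<xi> x \<alpha>. norm x \<le> R \<longrightarrow> norm \<xi> ^ 2 / K \<le> \<xi> \<bullet> (diffmat \<sigma> x \<alpha> *v \<xi>)"
    using elliptic[rule_format, of "max R 1"] by force
qed

theorem corollary2p4:
  fixes \<sigma> :: "real^'n \<Rightarrow> 'a::metric_space \<Rightarrow> real^'m^'n"
    and b :: "real^'n \<Rightarrow> 'a \<Rightarrow> real^'n"
    and c :: "real^'n \<Rightarrow> 'a \<Rightarrow> real"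
  assumes cont_sigma: "continuous_on UNIV (\<lambda>p. \<sigma> (fst p) (snd p))"
    and cont_b: "continuous_on UNIV (\<lambda>p. b (fst p) (snd p))"
    and cont_c: "continuous_on UNIV (\<lambda>p. c (fst p) (snd p))"
    and C1: "\<forall>R>0. \<exists>K. (\<forall>x \<alpha>. norm x \<le> R \<longrightarrow> norm (\<sigma> x \<alpha>) + norm (b x \<alpha>) + \<bar>c x \<alpha>\<bar> \<le> K)
              \<and> (\<forall>x y \<alpha>. norm x \<le> R \<longrightarrow> norm y \<le> R \<longrightarrow>
                   norm (\<sigma> x \<alpha> - \<sigma> y \<alpha>) + norm (b x \<alpha> - b y \<alpha>) \<le> K * norm (x - y))"
    and C2_nonneg: "\<forall>x \<alpha>. c x \<alpha> \<ge> 0"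
    and C2_unif: "\<forall>R>0. \<forall>\<epsilon>>0. \<exists>\<delta>>0. \<forall>x y \<alpha>. norm x \<le> R \<longrightarrow> norm y \<le> R \<longrightarrow>
                    norm (x - y) < \<delta> \<longrightarrow> \<bar>c x \<alpha> - c y \<alpha>\<bar> < \<epsilon>"
    and C3: "\<forall>R>0. \<exists>K>0. \<forall>\<xi> x \<alpha>. norm x \<le> R \<longrightarrow>
               \<xi> \<bullet> (diffmat \<sigma> x \<alpha> *v \<xi>) \<ge> norm \<xi> ^ 2 / K"
    and C4: "\<exists>Ro\<ge>0. \<forall>x. norm x \<ge> Ro \<longrightarrow>
               (SUP \<alpha>. trace (diffmat \<sigma> x \<alpha>) + b x \<alpha> \<bullet> x - c x \<alpha> * norm x ^ 2 / 2) \<le> 0"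
  shows "(\<forall>u. visc_sub (Gop \<sigma> b c) u
              \<and> Limsup at_infinity (\<lambda>x. ereal (u x / norm x ^ 2)) \<le> 0
              \<and> ((\<forall>x. u x \<ge> 0) \<or> (\<forall>x \<alpha>. c x \<alpha> = 0))
           \<longrightarrow> (\<exists>k. \<forall>x. u x = k))
       \<and> (\<forall>v. visc_super (Gtop \<sigma> b c) v
              \<and> Liminf at_infinity (\<lambda>x. ereal (v x / norm x ^ 2)) \<ge> 0
              \<and> ((\<forall>x. v x \<le> 0) \<or> (\<forall>x \<alpha>. c x \<alpha> = 0))
           \<longrightarrow> (\<exists>k. \<forall>x. v x = k))"
proof -
  interpret hjb_coefficients \<sigma> b c
    using hjb_coefficientsI[of \<sigma> b c] C1 C2_nonneg C3 by blast
  obtain Ro where "\<And>x. Ro \<le> norm x \<Longrightarrow>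
      (SUP \<alpha>. trace (diffmat \<sigma> x \<alpha>) + b x \<alpha> \<bullet> x - c x \<alpha> * norm x ^ 2 / 2) \<le> 0"
    using C4 by blast
  then show ?thesis
    using visc_sub_constant visc_super_constant by blast
qed

end
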